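(* Suppose the standing assumptions (1)–(5) below hold, and that $m$ nodes, possibly lying in different training graphs, request entire node removal at the same time, where $m<\min_i g_i$. That is, the updated dataset is $\mathcal{D}'=(\mathbf{Z}',\mathbf{y})$ where for each affected graph $\mathcal{G}_i$, $\mathbf{z}_i'=\Phi(\mathbf{S}_i',\mathbf{x}_i')$ with $\mathbf{x}_i'$ obtained from $\mathbf{x}_i$ by zeroing the entries of the removed nodes of $\mathcal{G}_i$ and $\mathbf{S}_i'$ obtained from $\mathbf{S}_i$ by zeroing the rows and columns of those nodes, and $\mathbf{z}_i'=\mathbf{z}_i$ for unaffected graphs. Then the updated model $\mathbf{w}'=\mathbf{w}^\star+\mathbf{H}_{\mathbf{w}^\star}^{-1}\Delta$ satisfies $$\|\nabla L(\mathbf{w}',\mathcal{D}')\|\leq\frac{4\gamma_2 m^2C_1^2F^3}{\lambda^2 n},\qquad F=\sqrt{\sum_{l=0}^{L-1}B^{2l}},$$ where $B$ is the upper frame constant of the graph wavelets used in the GST.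
   Context: Setting (graph classification). There are $n$ training graphs $\mathcal{G}_1,\dots,\mathcal{G}_n$. Graph $\mathcal{G}_i$ has $g_i$ nodes, a symmetric adjacency matrix $\mathbf{S}_i\in\mathbb{R}^{g_i\times g_i}$ (the graph shift operator), a node signal $\mathbf{x}_i\in\mathbb{R}^{g_i}$ (one scalar feature per node) and a label $y_i$. Graph scattering transform (GST). Fix positive integers $J,L$ and wavelet kernel functions $h_1,\dots,h_J:\mathbb{R}\to\mathbb{R}$. For a symmetric $\mathbf{S}=\mathbf{V}\mathbf{\Lambda}\mathbf{V}^T$ with eigenvalues $\lambda_1,\dots,\lambda_g$, set $\mathbf{H}_j(\mathbf{S})=\mathbf{V}\,\mathrm{diag}(h_j(\lambda_1),\dots,h_j(\lambda_g))\mathbf{V}^T$. The wavelets form a frame: there are constants $0<A\le B$ with $A^2\|\mathbf{x}\|^2\le\sum_{j=1}^J\|\mathbf{H}_j(\mathbf{S})\mathbf{x}\|^2\le B^2\|\mathbf{x}\|^2$ for all $\mathbf{x}$ (for all shift operators considered). Let $\rho$ be the entrywise absolute value. For a path $p=(j_1,\dots,j_l)$ with $j_k\in\{1,\dots,J\}$ and $0\le l\le L-1$, define $\Phi_{()}(\mathbf{S},\mathbf{x})=\mathbf{x}$ and $\Phi_{(j_1,\dots,j_l)}(\mathbf{S},\mathbf{x})=\rho\big(\mathbf{H}_{j_l}(\mathbf{S})\Phi_{(j_1,\dots,j_{l-1})}(\mathbf{S},\mathbf{x})\big)$, and the scalar coefficient $\phi_p(\mathbf{S},\mathbf{x})=U\Phi_p(\mathbf{S},\mathbf{x})$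 with the averaging operator $U=\frac{1}{g}\mathbf{1}^T$ ($g$ the number of nodes). The embedding $\Phi(\mathbf{S},\mathbf{x})\in\mathbb{R}^d$, $d=\sum_{l=0}^{L-1}J^l$, is the concatenation of all $\phi_p(\mathbf{S},\mathbf{x})$. Set $\mathbf{z}_i=\Phi(\mathbf{S}_i,\mathbf{x}_i)$, let $\mathbf{Z}$ have rows $\mathbf{z}_i^T$, and $\mathcal{D}=(\mathbf{Z},\mathbf{y})$. Learning and update. $\ell(s,y)$ is convex and twice differentiable in $s$; $\ell'$, $\ell''$ denote derivatives in $s$, and $\nabla$, $\nabla^2$ denote gradient/Hessian in $\mathbf{w}$. For a dataset $\mathcal{D}=(\mathbf{Z},\mathbf{y})$, $L(\mathbf{w},\mathcal{D})=\sum_{i=1}^n\big(\ell(\mathbf{w}^T\mathbf{z}_i,y_i)+\frac{\lambda}{2}\|\mathbf{w}\|^2\big)$ with $\lambda>0$, and $\mathbf{w}^\star=\arg\min_{\mathbf{w}}L(\mathbf{w},\mathcal{D})$. For the updated dataset $\mathcal{D}'$, set $\mathbf{H}_{\mathbf{w}^\star}=\nabla^2L(\mathbf{w}^\star,\mathcal{D}')$ and $\Delta=\nabla L(\mathbf{w}^\star,\mathcal{D})-\nabla L(\mathbf{w}^\star,\mathcal{D}')$. Norms are $\ell_2$ for vectors and operator norm for matrices. Standing assumptions: there are constants $C_1,C_2,\gamma_1,\gamma_2$ such that for every embedding $\mathbf{z}_i$ (of $\mathcal{D}$ or $\mathcal{D}'$) and every $\mathbf{w}\in\mathbb{R}^d$: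 (1) $\|\nabla\ell(\mathbf{w}^T\mathbf{z}_i,y_i)\|\le C_1$; (2) $|\ell'(\mathbf{w}^T\mathbf{z}_i,y_i)|\le C_2$; (3) $\ell'$ is $\gamma_1$-Lipschitz; (4) $\ell''$ is $\gamma_2$-Lipschitz; (5) the signals satisfy $|[\mathbf{x}_i]_j|\le1$ for all $i$ and all $j\in\{1,\dots,g_i\}$. *)

theory Defs
  imports "HOL-Analysis.Convex" "Jordan_Normal_Form.Matrix"
begin

definition diag_of :: "nat \<Rightarrow> (nat \<Rightarrow> real) \<Rightarrow> real mat" where
  "diag_of k f = mat k k (\<lambda>(a,b). if a = b then f a else 0)"

definition mat_fun :: "(real \<Rightarrow> real) \<Rightarrow> real mat \<Rightarrow> real mat" where
  "mat_fun h S = (THE M. \<exists>V lam. V \<in> carrier_mat (dim_row S) (dim_row S)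
      \<and> V * transpose_mat V = 1\<^sub>m (dim_row S)
      \<and> S = V * diag_of (dim_row S) lam * transpose_mat V
      \<and> M = V * diag_of (dim_row S) (\<lambda>a. h (lam a)) * transpose_mat V)"

definition vnorm :: "real vec \<Rightarrow> real" where
  "vnorm v = sqrt (scalar_prod v v)"

definition gst_node :: "(nat \<Rightarrow> real \<Rightarrow> real) \<Rightarrow> real mat \<Rightarrow> real vec \<Rightarrow> nat list \<Rightarrow> real vec" where
  "gst_node h S x p = foldl (\<lambda>v j. map_vec abs (mat_fun (h j) S *\<^sub>v v)) x p"

definition gst_coef :: "(nat \<Rightarrow> real \<Rightarrow> real) \<Rightarrow> real mat \<Rightarrow> real vec \<Rightarrow> nat list \<Rightarrow> real" where
  "gst_coef h S x p = (1 / real (dim_vec x)) * (\<Sum>a<dim_vec x. gst_node h S x p $ a)"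

definition gst_paths :: "nat \<Rightarrow> nat \<Rightarrow> nat list list" where
  "gst_paths J L = concat (map (\<lambda>l. List.n_lists l [1..<J+1]) [0..<L])"

definition gst_dim :: "nat \<Rightarrow> nat \<Rightarrow> nat" where
  "gst_dim J L = (\<Sum>l<L. J ^ l)"

definition gst :: "nat \<Rightarrow> nat \<Rightarrow> (nat \<Rightarrow> real \<Rightarrow> real) \<Rightarrow> real mat \<Rightarrow> real vec \<Rightarrow> real vec" where
  "gst J L h S x = vec_of_list (map (gst_coef h S x) (gst_paths J L))"

definition remove_signal :: "nat set \<Rightarrow> real vec \<Rightarrow> real vec" where
  "remove_signal R x = vec (dim_vec x) (\<lambda>a. if a \<in> R then 0 else x $ a)"

definition remove_shift :: "nat set \<Rightarrow> real mat \<Rightarrow> real mat" where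
  "remove_shift R S = mat (dim_row S) (dim_col S)
      (\<lambda>(a,b). if a \<in> R \<or> b \<in> R then 0 else S $$ (a,b))"

definition risk :: "(real \<Rightarrow> 'y \<Rightarrow> real) \<Rightarrow> real \<Rightarrow> nat \<Rightarrow> (nat \<Rightarrow> real vec) \<Rightarrow> (nat \<Rightarrow> 'y)
   \<Rightarrow> real vec \<Rightarrow> real" where
  "risk ls lam n z y w = (\<Sum>i<n. ls (scalar_prod w (z i)) (y i) + lam / 2 * (vnorm w)\<^sup>2)"

definition risk_grad :: "(real \<Rightarrow> 'y \<Rightarrow> real) \<Rightarrow> real \<Rightarrow> nat \<Rightarrow> nat \<Rightarrow> (nat \<Rightarrow> real vec)
   \<Rightarrow> (nat \<Rightarrow> 'y) \<Rightarrow> real vec \<Rightarrow> real vec" where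
  "risk_grad ls' lam d n z y w =
     vec d (\<lambda>a. \<Sum>i<n. ls' (scalar_prod w (z i)) (y i) * (z i $ a) + lam * (w $ a))"

definition risk_hess :: "(real \<Rightarrow> 'y \<Rightarrow> real) \<Rightarrow> real \<Rightarrow> nat \<Rightarrow> nat \<Rightarrow> (nat \<Rightarrow> real vec)
   \<Rightarrow> (nat \<Rightarrow> 'y) \<Rightarrow> real vec \<Rightarrow> real mat" where
  "risk_hess ls'' lam d n z y w =
     mat d d (\<lambda>(a,b). \<Sum>i<n. ls'' (scalar_prod w (z i)) (y i) * (z i $ a) * (z i $ b)
                         + (if a = b then lam else 0))"

definition mat_inv :: "nat \<Rightarrow> real mat \<Rightarrow> real mat" where
  "mat_inv d H = (THE B. B \<in> carrier_mat d d \<and> H * B = 1\<^sub>m d \<and> B * H = 1\<^sub>m d)"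

end

(*
  Since the original model is a minimiser, the gradient on the updated data at w* is -Delta,
  so w' = w* + H^-1 Delta is one Newton step and the updated gradient at w' is a sum of
  second-order Taylor remainders of l': by the Lipschitz bound on l'' each is at most
  gamma2 (u . z'_i)^2 |z'_i| <= gamma2 |u|^2 F^3, where u = H^-1 Delta.  The regulariser makes
  H >= n lam I, so |u| <= |Delta| / (n lam), and only the graphs with removed nodes change the
  gradient, each by at most 2 C1 per removed node, so |Delta| <= 2 m C1.

  The bound |Phi(S, x)| <= F on the embeddings comes from the frame inequality: the absolute
  value preserves norms, so the paths of length l carry energy at most B^(2l) |x|^2, and the
  averaging operator divides by g >= |x|^2 (Cauchy-Schwarz and |x_j| <= 1).  That the wavelet
  h(S) = V diag(h(lam)) V^T is a well-defined g x g matrix needs the spectral theorem for real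
  symmetric matrices together with the uniqueness of this expression.
*)
theory Submission
  imports Defs "Jordan_Normal_Form.Schur_Decomposition"
    "HOL-Computational_Algebra.Fundamental_Theorem_Algebra" "HOL-Analysis.L2_Norm"
begin

lemma scalar_prod_self_nonneg: "0 \<le> (v :: real vec) \<bullet> v"
  using conjugate_square_ge_0_vec[of v] by simp

lemma scalar_prod_self_pos:
  "(v :: real vec) \<in> carrier_vec n \<Longrightarrow> v \<noteq> 0\<^sub>v n \<Longrightarrow> 0 < v \<bullet> v"
  using conjugate_square_greater_0_vec[of v n] by simp

lemma vnorm_nonneg: "0 \<le> vnorm v"
  by (simp add: vnorm_def scalar_prod_self_nonneg)

lemma vnorm_sq: "(vnorm v)\<^sup>2 = v \<bullet> v"
  by (simp add: vnorm_def scalar_prod_self_nonneg)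

lemma vnorm_sq_eq_sum: "v \<in> carrier_vec n \<Longrightarrow> (vnorm v)\<^sup>2 = (\<Sum>a<n. (v $ a)\<^sup>2)"
  unfolding vnorm_sq by (simp add: scalar_prod_def power2_eq_square atLeast0LessThan)

lemma vnorm_map_abs [simp]: "vnorm (map_vec abs v) = vnorm v"
  by (simp add: vnorm_def scalar_prod_def abs_mult_self_eq)

lemma vnorm_eq_L2_set: "v \<in> carrier_vec n \<Longrightarrow> vnorm v = L2_set (\<lambda>a. v $ a) {..<n}"
  by (simp add: vnorm_def scalar_prod_def L2_set_def power2_eq_square atLeast0LessThan)

lemma vnorm_smult: "vnorm (c \<cdot>\<^sub>v v) = \<bar>c\<bar> * vnorm v"
proof -
  have "(c \<cdot>\<^sub>v v) \<bullet> (c \<cdot>\<^sub>v v) = c\<^sup>2 * (v \<bullet> v)"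
    using carrier_vec_dim_vec[of v]
    by (simp add: smult_scalar_prod_distrib scalar_prod_smult_distrib power2_eq_square)
  thus ?thesis by (simp add: vnorm_def real_sqrt_mult)
qed

lemma abs_scalar_prod_le:
  assumes "v \<in> carrier_vec n" "w \<in> carrier_vec n"
  shows "\<bar>v \<bullet> w\<bar> \<le> vnorm v * vnorm w"
proof -
  have "(v \<bullet> w)\<^sup>2 \<le> (vnorm v)\<^sup>2 * (vnorm w)\<^sup>2"
    using Cauchy_Schwarz_ineq_sum[of "\<lambda>a. v $ a" "\<lambda>a. w $ a" "{..<n}"] assms
    by (simp add: scalar_prod_def vnorm_sq_eq_sum atLeast0LessThan)
  thus ?thesis
    using power2_le_imp_le[of "\<bar>v \<bullet> w\<bar>" "vnorm v * vnorm w"]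
    by (simp add: power_mult_distrib vnorm_nonneg)
qed

lemma vnorm_diff_le:
  assumes "v \<in> carrier_vec n" "w \<in> carrier_vec n"
  shows "vnorm (v - w) \<le> vnorm v + vnorm w"
proof -
  have "L2_set (\<lambda>a. v $ a + - (w $ a)) {..<n} \<le> L2_set (\<lambda>a. v $ a) {..<n} + L2_set (\<lambda>a. - (w $ a)) {..<n}"
    by (rule L2_set_triangle_ineq)
  thus ?thesis using assms by (simp add: vnorm_eq_L2_set[of _ n] L2_set_def cong: L2_set_cong)
qed

lemma L2_set_sum_le:
  fixes f :: "nat \<Rightarrow> 'a \<Rightarrow> real"
  shows "L2_set (\<lambda>a. \<Sum>i<n. f i a) A \<le> (\<Sum>i<n. L2_set (f i) A)"
proof (induction n)
  case (Suc n)
  have "L2_set (\<lambda>a. \<Sum>i<Suc n. f i a) A \<le> L2_set (\<lambda>a. \<Sum>i<n. f i a) A + L2_set (f n) A"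
    using L2_set_triangle_ineq[of "\<lambda>a. \<Sum>i<n. f i a" "f n" A] by simp
  thus ?case using Suc.IH by simp
qed (simp add: L2_set_0')

lemma vnorm_sum_le:
  fixes v :: "nat \<Rightarrow> real vec"
  assumes "\<And>i. i < n \<Longrightarrow> v i \<in> carrier_vec d"
  shows "vnorm (vec d (\<lambda>a. \<Sum>i<n. v i $ a)) \<le> (\<Sum>i<n. vnorm (v i))"
proof -
  have "vnorm (vec d (\<lambda>a. \<Sum>i<n. v i $ a)) = L2_set (\<lambda>a. \<Sum>i<n. v i $ a) {..<d}"
    by (subst vnorm_eq_L2_set[of _ d]) (auto intro!: L2_set_cong)
  also have "\<dots> \<le> (\<Sum>i<n. L2_set (\<lambda>a. v i $ a) {..<d})"
    using L2_set_sum_le[of "\<lambda>i a. v i $ a" n "{..<d}"] by simp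
  also have "\<dots> = (\<Sum>i<n. vnorm (v i))"
    using assms by (intro sum.cong) (simp_all add: vnorm_eq_L2_set[symmetric])
  finally show ?thesis .
qed

lemma vnorm_lincomb_le:
  fixes Z :: "nat \<Rightarrow> real vec"
  assumes "\<And>i. i < n \<Longrightarrow> Z i \<in> carrier_vec d"
  shows "vnorm (vec d (\<lambda>a. \<Sum>i<n. r i * Z i $ a)) \<le> (\<Sum>i<n. \<bar>r i\<bar> * vnorm (Z i))"
proof -
  have "(r i \<cdot>\<^sub>v Z i) $ a = r i * Z i $ a" if "i < n" "a < d" for i a
    using assms[OF that(1)] that(2) by simp
  hence "vec d (\<lambda>a. \<Sum>i<n. r i * Z i $ a) = vec d (\<lambda>a. \<Sum>i<n. (r i \<cdot>\<^sub>v Z i) $ a)"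
    by (intro eq_vecI sum.cong) auto
  thus ?thesis using vnorm_sum_le[of n "\<lambda>i. r i \<cdot>\<^sub>v Z i" d] assms by (simp add: vnorm_smult)
qed

section \<open>Spectral theorem for real symmetric matrices\<close>

lemma complex_eigenvector_real_parts:
  fixes A :: "real mat"
  assumes A: "A \<in> carrier_mat n n" and u: "u \<in> carrier_vec n"
    and eig: "map_mat complex_of_real A *\<^sub>v u = e \<cdot>\<^sub>v u"
  shows "A *\<^sub>v map_vec Re u = Re e \<cdot>\<^sub>v map_vec Re u - Im e \<cdot>\<^sub>v map_vec Im u"
    and "A *\<^sub>v map_vec Im u = Re e \<cdot>\<^sub>v map_vec Im u + Im e \<cdot>\<^sub>v map_vec Re u"
proof -
  have row: "(\<Sum>b<n. complex_of_real (A $$ (a, b)) * u $ b) = e * u $ a" if "a < n" for a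
    using arg_cong[OF eig, of "\<lambda>v. v $ a"] that A u
    by (simp add: scalar_prod_def atLeast0LessThan)
  show "A *\<^sub>v map_vec Re u = Re e \<cdot>\<^sub>v map_vec Re u - Im e \<cdot>\<^sub>v map_vec Im u"
    using A u row[THEN arg_cong[where f=Re]]
    by (intro eq_vecI) (auto simp: scalar_prod_def atLeast0LessThan Re_sum)
  show "A *\<^sub>v map_vec Im u = Re e \<cdot>\<^sub>v map_vec Im u + Im e \<cdot>\<^sub>v map_vec Re u"
    using A u row[THEN arg_cong[where f=Im]]
    by (intro eq_vecI) (auto simp: scalar_prod_def atLeast0LessThan Im_sum)
qed

lemma symmetric_real_eigenvector:
  fixes A :: "real mat"
  assumes A: "A \<in> carrier_mat n n" and sym: "transpose_mat A = A" and n: "0 < n"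
  obtains e v where "v \<in> carrier_vec n" "v \<noteq> 0\<^sub>v n" "A *\<^sub>v v = e \<cdot>\<^sub>v v"
proof -
  let ?Ac = "map_mat complex_of_real A"
  have Ac: "?Ac \<in> carrier_mat n n" using A by simp
  have "\<not> constant (poly (char_poly ?Ac))"
    using degree_monic_char_poly[OF Ac] n by (simp add: constant_degree)
  then obtain e where "poly (char_poly ?Ac) e = 0" using fundamental_theorem_of_algebra by blast
  then obtain u where "eigenvector ?Ac u e"
    using eigenvalue_root_char_poly[OF Ac] unfolding eigenvalue_def by blast
  hence u: "u \<in> carrier_vec n" "u \<noteq> 0\<^sub>v n" and eig: "?Ac *\<^sub>v u = e \<cdot>\<^sub>v u"
    unfolding eigenvector_def using Ac by auto
  define r where "r = map_vec Re u"
  define s where "s = map_vec Im u"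
  have r: "r \<in> carrier_vec n" and s: "s \<in> carrier_vec n" using u by (auto simp: r_def s_def)
  have Ar: "A *\<^sub>v r = Re e \<cdot>\<^sub>v r - Im e \<cdot>\<^sub>v s" and As: "A *\<^sub>v s = Re e \<cdot>\<^sub>v s + Im e \<cdot>\<^sub>v r"
    using complex_eigenvector_real_parts[OF A u(1) eig] by (simp_all add: r_def s_def)
  have "s \<bullet> (A *\<^sub>v r) = r \<bullet> (A *\<^sub>v s)"
    using transpose_vec_mult_scalar[OF A r s] sym comm_scalar_prod[of r n "A *\<^sub>v s"] A r s by simp
  hence Im_e: "Im e * (r \<bullet> r + s \<bullet> s) = 0"
    unfolding Ar As using r s comm_scalar_prod[OF r s]
    by (simp add: scalar_prod_add_distrib[of _ n] scalar_prod_minus_distrib[of _ n] algebra_simps)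
  have nonzero: "r \<noteq> 0\<^sub>v n \<or> s \<noteq> 0\<^sub>v n"
  proof (rule ccontr)
    assume "\<not> (r \<noteq> 0\<^sub>v n \<or> s \<noteq> 0\<^sub>v n)"
    hence "Re (u $ i) = 0 \<and> Im (u $ i) = 0" if "i < n" for i
      using that u by (auto simp: r_def s_def dest!: arg_cong[where f="\<lambda>v. v $ i"])
    hence "u = 0\<^sub>v n" using u by (auto simp: complex_eq_iff intro!: eq_vecI)
    with u(2) show False ..
  qed
  hence "0 < r \<bullet> r + s \<bullet> s"
    using scalar_prod_self_pos[OF r] scalar_prod_self_pos[OF s]
      scalar_prod_self_nonneg[of r] scalar_prod_self_nonneg[of s] by fastforce
  hence "Im e = 0" using Im_e by simp
  hence "A *\<^sub>v r = Re e \<cdot>\<^sub>v r" "A *\<^sub>v s = Re e \<cdot>\<^sub>v s"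
    using Ar As r s by (auto intro!: eq_vecI)
  thus thesis using that r s nonzero by blast
qed

lemma orthogonal_mat_of_normalized_cols:
  fixes ws :: "real vec list"
  assumes ws: "corthogonal ws" "set ws \<subseteq> carrier_vec n" "length ws = n"
  defines "U \<equiv> mat_of_cols n (map (\<lambda>w. (1 / sqrt (w \<bullet> w)) \<cdot>\<^sub>v w) ws)"
  shows "U \<in> carrier_mat n n" "transpose_mat U * U = 1\<^sub>m n"
    and "\<And>i. i < n \<Longrightarrow> col U i = (1 / sqrt (ws ! i \<bullet> ws ! i)) \<cdot>\<^sub>v ws ! i"
proof -
  have ws_i: "ws ! i \<in> carrier_vec n" if "i < n" for i using ws(2,3) that by auto
  have orth: "ws ! i \<bullet> ws ! j = 0 \<longleftrightarrow> i \<noteq> j" if "i < n" "j < n" for i j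
    using corthogonalD[OF ws(1), of i j] ws(3) that by simp
  show U: "U \<in> carrier_mat n n" using ws(3) by (simp add: U_def mat_of_cols_def)
  show col_U: "col U i = (1 / sqrt (ws ! i \<bullet> ws ! i)) \<cdot>\<^sub>v ws ! i" if "i < n" for i
    using that ws(3) ws_i by (simp add: U_def)
  have "col U i \<bullet> col U j = (if i = j then 1 else 0)" if "i < n" "j < n" for i j
  proof -
    have "col U i \<bullet> col U j
        = ws ! i \<bullet> ws ! j / (sqrt (ws ! i \<bullet> ws ! i) * sqrt (ws ! j \<bullet> ws ! j))"
      using ws_i[OF that(1)] ws_i[OF that(2)]
      by (simp add: col_U that smult_scalar_prod_distrib scalar_prod_smult_distrib)
    moreover have "0 < ws ! i \<bullet> ws ! i"
      using orth[of i i] scalar_prod_self_nonneg[of "ws ! i"] that by fastforce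
    ultimately show ?thesis using orth[OF that] by auto
  qed
  thus "transpose_mat U * U = 1\<^sub>m n" using U by (intro eq_matI) auto
qed

lemma orthonormal_completion:
  fixes v :: "real vec"
  assumes v: "v \<in> carrier_vec n" and unit: "v \<bullet> v = 1"
  obtains U where "U \<in> carrier_mat n n" "transpose_mat U * U = 1\<^sub>m n" "col U 0 = v"
proof -
  interpret cof_vec_space n "TYPE(real)" .
  have v0: "v \<noteq> 0\<^sub>v n" using unit v by auto
  obtain b where b: "set b \<subseteq> carrier_vec n" "distinct b" "\<not> lin_dep (set b)" "length b = n"
      "hd b = v"
    using basis_completion[OF v v0] by blast
  have n: "0 < n" using v v0 by (cases n) auto
  then obtain vs where bv: "b = v # vs" using b(4,5) by (cases b) auto
  define ws where "ws = gram_schmidt n b"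
  have ws: "corthogonal ws" "set ws \<subseteq> carrier_vec n" "length ws = n" "hd ws = v"
    using gram_schmidt_result[OF b(1-3) ws_def] b(4) gram_schmidt_hd[OF v, of vs]
    by (auto simp: ws_def bv)
  have "ws ! 0 = v" using ws(3,4) n hd_conv_nth[of ws] by fastforce
  thus thesis
    using that orthogonal_mat_of_normalized_cols[OF ws(1-3)] n unit by simp
qed

lemma symmetric_deflation:
  fixes A U :: "real mat"
  assumes A: "A \<in> carrier_mat (Suc k) (Suc k)" and sym: "transpose_mat A = A"
    and U: "U \<in> carrier_mat (Suc k) (Suc k)" "transpose_mat U * U = 1\<^sub>m (Suc k)"
    and eig: "A *\<^sub>v col U 0 = e \<cdot>\<^sub>v col U 0"
  obtains A3 where "A3 \<in> carrier_mat k k" "transpose_mat A3 = A3"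
    "transpose_mat U * A * U = four_block_mat (mat 1 1 (\<lambda>_. e)) (0\<^sub>m 1 k) (0\<^sub>m k 1) A3"
proof -
  define A' where "A' = transpose_mat U * A * U"
  have A': "A' \<in> carrier_mat (Suc k) (Suc k)" using A U by (simp add: A'_def)
  have "transpose_mat A' = A'"
    using A U sym by (simp add: A'_def transpose_mult[of _ "Suc k" "Suc k" _ "Suc k"])
  hence sym': "A' $$ (i, j) = A' $$ (j, i)" if "i < Suc k" "j < Suc k" for i j
    using that A' by (metis carrier_matD index_transpose_mat(1))
  have col0: "A' $$ (i, 0) = (if i = 0 then e else 0)" if "i < Suc k" for i
  proof -
    have "A' $$ (i, 0) = col U i \<bullet> (A *\<^sub>v col U 0)"
      using A U that by (simp add: A'_def)
    also have "\<dots> = e * (col U i \<bullet> col U 0)"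
      using U that by (simp add: eig scalar_prod_smult_distrib[of _ "Suc k"])
    also have "col U i \<bullet> col U 0 = (transpose_mat U * U) $$ (i, 0)"
      using U(1) that by simp
    finally show ?thesis using that by (simp add: U(2))
  qed
  define A3 where "A3 = mat k k (\<lambda>(i, j). A' $$ (Suc i, Suc j))"
  have "A' = four_block_mat (mat 1 1 (\<lambda>_. e)) (0\<^sub>m 1 k) (0\<^sub>m k 1) A3"
  proof (rule eq_matI)
    fix i j assume "i < dim_row (four_block_mat (mat 1 1 (\<lambda>_. e)) (0\<^sub>m 1 k) (0\<^sub>m k 1) A3)"
      "j < dim_col (four_block_mat (mat 1 1 (\<lambda>_. e)) (0\<^sub>m 1 k) (0\<^sub>m k 1) A3)"
    hence ij: "i < Suc k" "j < Suc k" by (auto simp: A3_def)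
    show "A' $$ (i, j) = four_block_mat (mat 1 1 (\<lambda>_. e)) (0\<^sub>m 1 k) (0\<^sub>m k 1) A3 $$ (i, j)"
      using ij col0 col0[of j] sym'[OF ij]
      by (cases i; cases j) (auto simp: A3_def)
  qed (use A' in \<open>auto simp: A3_def\<close>)
  moreover have "transpose_mat A3 = A3"
    using sym' by (intro eq_matI) (auto simp: A3_def)
  moreover have "A3 \<in> carrier_mat k k" by (simp add: A3_def)
  ultimately show thesis using that unfolding A'_def by blast
qed

lemma diag_of_carrier: "diag_of n f \<in> carrier_mat n n"
  by (simp add: diag_of_def)

lemma diag_of_Suc:
  "diag_of (Suc k) (\<lambda>a. if a = 0 then e else lam (a - 1))
     = four_block_mat (mat 1 1 (\<lambda>_. e)) (0\<^sub>m 1 k) (0\<^sub>m k 1) (diag_of k lam)"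
  by (intro eq_matI) (auto simp: diag_of_def)

lemma mult_mult_transpose_assoc:
  fixes U W D :: "'a :: comm_semiring_0 mat"
  assumes U: "U \<in> carrier_mat n n" and W: "W \<in> carrier_mat n n" and D: "D \<in> carrier_mat n n"
  shows "U * W * D * transpose_mat (U * W) = U * (W * D * transpose_mat W) * transpose_mat U"
  using U W D by (simp add: transpose_mult[OF U W] assoc_mult_mat[of _ n n _ n _ n])

lemma orthogonal_conj_cancel:
  fixes U X :: "'a :: comm_ring_1 mat"
  assumes U: "U \<in> carrier_mat n n" "U * transpose_mat U = 1\<^sub>m n" and X: "X \<in> carrier_mat n n"
  shows "U * (transpose_mat U * X * U) * transpose_mat U = X"
proof -
  have "U * (transpose_mat U * X * U) * transpose_mat U
      = (U * transpose_mat U) * X * (U * transpose_mat U)"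
    using U(1) X by (simp add: assoc_mult_mat[of _ n n _ n _ n])
  also have "\<dots> = X" using X by (simp add: U(2))
  finally show ?thesis .
qed

lemma orthogonal_diagonalization_extend:
  fixes A U V3 :: "real mat"
  assumes U: "U \<in> carrier_mat (Suc k) (Suc k)" "U * transpose_mat U = 1\<^sub>m (Suc k)"
    and A: "A \<in> carrier_mat (Suc k) (Suc k)"
    and V3: "V3 \<in> carrier_mat k k" "V3 * transpose_mat V3 = 1\<^sub>m k"
    and block: "transpose_mat U * A * U = four_block_mat (mat 1 1 (\<lambda>_. e)) (0\<^sub>m 1 k) (0\<^sub>m k 1)
      (V3 * diag_of k lam3 * transpose_mat V3)"
  obtains V lam where "V \<in> carrier_mat (Suc k) (Suc k)" "V * transpose_mat V = 1\<^sub>m (Suc k)"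
    "A = V * diag_of (Suc k) lam * transpose_mat V"
proof -
  define W where "W = four_block_mat (1\<^sub>m 1) (0\<^sub>m 1 k) (0\<^sub>m k 1) V3"
  define lam where "lam a = (if a = 0 then e else lam3 (a - 1))" for a
  have W: "W \<in> carrier_mat (Suc k) (Suc k)"
    using four_block_carrier_mat[of "1\<^sub>m 1" 1 1 V3 k k] V3(1) by (simp add: W_def)
  have Wt: "transpose_mat W = four_block_mat (1\<^sub>m 1) (0\<^sub>m 1 k) (0\<^sub>m k 1) (transpose_mat V3)"
    using V3(1) by (simp add: W_def transpose_four_block_mat[of _ 1 1 _ k _ k])
  have WWt: "W * transpose_mat W = 1\<^sub>m (Suc k)"
    unfolding Wt unfolding W_def using V3
    by (subst mult_four_block_mat[of _ 1 1 _ k _ k]) auto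
  have WD: "W * diag_of (Suc k) lam
      = four_block_mat (mat 1 1 (\<lambda>_. e)) (0\<^sub>m 1 k) (0\<^sub>m k 1) (V3 * diag_of k lam3)"
    unfolding W_def lam_def diag_of_Suc using V3(1) diag_of_carrier[of k lam3]
    by (subst mult_four_block_mat[of _ 1 1 _ k _ k]) (auto simp: left_mult_zero_mat[of _ k k])
  have WDWt: "W * diag_of (Suc k) lam * transpose_mat W = transpose_mat U * A * U"
    unfolding block Wt WD using V3(1) diag_of_carrier[of k lam3]
    by (subst mult_four_block_mat[of _ 1 1 _ k _ k])
      (auto simp: right_mult_zero_mat[of _ k k] left_add_zero_mat[of _ k k])
  show thesis
  proof
    show "U * W \<in> carrier_mat (Suc k) (Suc k)" using U(1) W by simp
    have "U * W * transpose_mat (U * W) = U * (W * transpose_mat W) * transpose_mat U"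
      using mult_mult_transpose_assoc[OF U(1) W one_carrier_mat] U(1) W by simp
    thus "U * W * transpose_mat (U * W) = 1\<^sub>m (Suc k)" using WWt U by simp
    have "U * W * diag_of (Suc k) lam * transpose_mat (U * W)
        = U * (W * diag_of (Suc k) lam * transpose_mat W) * transpose_mat U"
      using mult_mult_transpose_assoc[OF U(1) W diag_of_carrier] .
    also have "\<dots> = A"
      unfolding WDWt by (rule orthogonal_conj_cancel[OF U A])
    finally show "A = U * W * diag_of (Suc k) lam * transpose_mat (U * W)" ..
  qed
qed

theorem symmetric_orthogonal_diagonalization:
  fixes A :: "real mat"
  assumes "A \<in> carrier_mat n n" "transpose_mat A = A"
  obtains V lam where "V \<in> carrier_mat n n" "V * transpose_mat V = 1\<^sub>m n"
    "A = V * diag_of n lam * transpose_mat V"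
  using assms
proof (induction n arbitrary: A thesis)
  case 0
  show ?case
    by (rule "0.prems"(1)[of "1\<^sub>m 0" "\<lambda>_. 0"]) (use "0.prems"(2) in \<open>auto intro!: eq_matI\<close>)
next
  case (Suc k A)
  obtain e r where r: "r \<in> carrier_vec (Suc k)" "r \<noteq> 0\<^sub>v (Suc k)" "A *\<^sub>v r = e \<cdot>\<^sub>v r"
    using symmetric_real_eigenvector[OF Suc.prems(2,3)] by blast
  define v where "v = (1 / sqrt (r \<bullet> r)) \<cdot>\<^sub>v r"
  have "0 < r \<bullet> r" using scalar_prod_self_pos[OF r(1,2)] .
  hence v: "v \<in> carrier_vec (Suc k)" "v \<bullet> v = 1"
    using r(1) by (simp_all add: v_def smult_scalar_prod_distrib scalar_prod_smult_distrib)
  obtain U where U: "U \<in> carrier_mat (Suc k) (Suc k)" "transpose_mat U * U = 1\<^sub>m (Suc k)"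
      "col U 0 = v"
    using orthonormal_completion[OF v] by blast
  have "A *\<^sub>v col U 0 = e \<cdot>\<^sub>v col U 0"
    using Suc.prems(2) r by (simp add: U(3) v_def mult_mat_vec smult_smult_assoc mult.commute)
  then obtain A3 where A3: "A3 \<in> carrier_mat k k" "transpose_mat A3 = A3"
      "transpose_mat U * A * U = four_block_mat (mat 1 1 (\<lambda>_. e)) (0\<^sub>m 1 k) (0\<^sub>m k 1) A3"
    using symmetric_deflation[OF Suc.prems(2,3) U(1,2)] by blast
  obtain V3 lam3 where V3: "V3 \<in> carrier_mat k k" "V3 * transpose_mat V3 = 1\<^sub>m k"
      "A3 = V3 * diag_of k lam3 * transpose_mat V3"
    using Suc.IH[OF _ A3(1,2)] by blast
  have "U * transpose_mat U = 1\<^sub>m (Suc k)"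
    using mat_mult_left_right_inverse[OF _ U(1) U(2)] U(1) by simp
  from orthogonal_diagonalization_extend[OF U(1) this Suc.prems(2) V3(1,2)] A3(3) V3(3)
  show ?case using Suc.prems(1) by blast
qed

section \<open>Functional calculus\<close>

lemma mult_diag_of_index:
  assumes M: "M \<in> carrier_mat n n" and a: "a < n" and b: "b < n"
  shows "(M * diag_of n f) $$ (a, b) = M $$ (a, b) * f b"
    and "(diag_of n f * M) $$ (a, b) = f a * M $$ (a, b)"
proof -
  have "(M * diag_of n f) $$ (a, b) = (\<Sum>c\<in>{0..<n}. M $$ (a, c) * (if c = b then f c else 0))"
    using M a b by (simp add: scalar_prod_def diag_of_def)
  also have "\<dots> = (\<Sum>c\<in>{0..<n}. if c = b then M $$ (a, c) * f c else 0)"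
    by (intro sum.cong) auto
  finally show "(M * diag_of n f) $$ (a, b) = M $$ (a, b) * f b" using b by simp
  have "(diag_of n f * M) $$ (a, b) = (\<Sum>c\<in>{0..<n}. (if a = c then f a else 0) * M $$ (c, b))"
    using M a b by (simp add: scalar_prod_def diag_of_def)
  also have "\<dots> = (\<Sum>c\<in>{0..<n}. if c = a then f a * M $$ (c, b) else 0)"
    by (intro sum.cong) auto
  finally show "(diag_of n f * M) $$ (a, b) = f a * M $$ (a, b)" using a by simp
qed

lemma diag_of_intertwine:
  assumes Q: "Q \<in> carrier_mat n n" and QD: "Q * diag_of n lam = diag_of n mu * Q"
  shows "Q * diag_of n (\<lambda>a. h (lam a)) = diag_of n (\<lambda>a. h (mu a)) * Q"
proof (rule eq_matI)
  fix a b assume "a < dim_row (diag_of n (\<lambda>a. h (mu a)) * Q)"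
    "b < dim_col (diag_of n (\<lambda>a. h (mu a)) * Q)"
  hence ab: "a < n" "b < n" using Q by (auto simp: diag_of_def)
  have "Q $$ (a, b) * lam b = mu a * Q $$ (a, b)"
    using arg_cong[OF QD, of "\<lambda>M. M $$ (a, b)"] by (simp add: mult_diag_of_index[OF Q ab])
  hence "Q $$ (a, b) = 0 \<or> lam b = mu a" by auto
  thus "(Q * diag_of n (\<lambda>a. h (lam a))) $$ (a, b) = (diag_of n (\<lambda>a. h (mu a)) * Q) $$ (a, b)"
    by (auto simp: mult_diag_of_index[OF Q ab])
qed (use Q in \<open>auto simp: diag_of_def\<close>)

lemma functional_calculus_unique:
  fixes V W :: "real mat"
  assumes V: "V \<in> carrier_mat n n" "V * transpose_mat V = 1\<^sub>m n"
    and W: "W \<in> carrier_mat n n" "W * transpose_mat W = 1\<^sub>m n"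
    and eq: "V * diag_of n lam * transpose_mat V = W * diag_of n mu * transpose_mat W"
  shows "V * diag_of n (\<lambda>a. h (lam a)) * transpose_mat V
       = W * diag_of n (\<lambda>a. h (mu a)) * transpose_mat W"
proof -
  note assoc = assoc_mult_mat[of _ n n _ n _ n]
  have VtV: "transpose_mat V * V = 1\<^sub>m n"
    using mat_mult_left_right_inverse[OF V(1) _ V(2)] V(1) by simp
  have WtW: "transpose_mat W * W = 1\<^sub>m n"
    using mat_mult_left_right_inverse[OF W(1) _ W(2)] W(1) by simp
  note D = diag_of_carrier[of n lam] diag_of_carrier[of n mu]
    diag_of_carrier[of n "\<lambda>a. h (lam a)"] diag_of_carrier[of n "\<lambda>a. h (mu a)"]
  define Q where "Q = transpose_mat W * V"
  have Q: "Q \<in> carrier_mat n n" using V W by (simp add: Q_def)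
  have "Q * diag_of n lam = transpose_mat W * (V * diag_of n lam * transpose_mat V) * V"
    using V(1) W(1) D by (simp add: Q_def assoc VtV)
  also have "\<dots> = (transpose_mat W * W) * diag_of n mu * Q"
    using V(1) W(1) D by (simp add: eq Q_def assoc)
  also have "\<dots> = diag_of n mu * Q"
    using Q D by (simp add: WtW)
  finally have QDh: "Q * diag_of n (\<lambda>a. h (lam a)) = diag_of n (\<lambda>a. h (mu a)) * Q"
    by (rule diag_of_intertwine[OF Q])
  have "W * Q = (W * transpose_mat W) * V" using V(1) W(1) by (simp add: Q_def assoc)
  hence WQ: "W * Q = V" using V(1) by (simp add: W(2))
  have "V * diag_of n (\<lambda>a. h (lam a)) * transpose_mat V
      = W * (Q * diag_of n (\<lambda>a. h (lam a))) * transpose_mat V"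
    using W(1) Q D by (simp add: assoc flip: WQ)
  also have "\<dots> = W * diag_of n (\<lambda>a. h (mu a)) * (Q * transpose_mat V)"
    using V(1) W(1) Q D by (simp add: QDh assoc)
  also have "\<dots> = W * diag_of n (\<lambda>a. h (mu a)) * transpose_mat W"
    using V W(1) D by (simp add: Q_def assoc)
  finally show ?thesis .
qed

lemma mat_fun_eq:
  fixes S :: "real mat"
  assumes V: "V \<in> carrier_mat n n" "V * transpose_mat V = 1\<^sub>m n"
    and S: "S = V * diag_of n lam * transpose_mat V"
  shows "mat_fun h S = V * diag_of n (\<lambda>a. h (lam a)) * transpose_mat V"
proof -
  have "dim_row S = n" using S V(1) by simp
  thus ?thesis
    unfolding mat_fun_def
  proof (intro the_equality)
    fix M assume "\<exists>V' lam'. V' \<in> carrier_mat (dim_row S) (dim_row S)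
      \<and> V' * transpose_mat V' = 1\<^sub>m (dim_row S) \<and> S = V' * diag_of (dim_row S) lam' * transpose_mat V'
      \<and> M = V' * diag_of (dim_row S) (\<lambda>a. h (lam' a)) * transpose_mat V'"
    thus "M = V * diag_of n (\<lambda>a. h (lam a)) * transpose_mat V"
      using functional_calculus_unique[OF _ _ V, of _ _ lam h] S \<open>dim_row S = n\<close> by metis
  qed (use V S in blast)
qed

lemma mat_fun_carrier:
  assumes "S \<in> carrier_mat n n" "transpose_mat S = S"
  shows "mat_fun h S \<in> carrier_mat n n"
proof -
  obtain V lam where "V \<in> carrier_mat n n" "V * transpose_mat V = 1\<^sub>m n"
    "S = V * diag_of n lam * transpose_mat V"
    using symmetric_orthogonal_diagonalization[OF assms] .
  thus ?thesis using diag_of_carrier[of n] by (simp add: mat_fun_eq mult_carrier_mat[of _ n n _ n])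
qed

section \<open>Energy of the graph scattering transform\<close>

lemma gst_node_Nil [simp]: "gst_node h T x [] = x"
  by (simp add: gst_node_def)

lemma gst_node_Cons [simp]:
  "gst_node h T x (j # p) = gst_node h T (map_vec abs (mat_fun (h j) T *\<^sub>v x)) p"
  by (simp add: gst_node_def)

lemma gst_node_carrier:
  assumes T: "T \<in> carrier_mat g g" "transpose_mat T = T" and x: "x \<in> carrier_vec g"
  shows "gst_node h T x p \<in> carrier_vec g"
  using x
proof (induction p arbitrary: x)
  case (Cons j p)
  have "map_vec abs (mat_fun (h j) T *\<^sub>v x) \<in> carrier_vec g"
    using mat_fun_carrier[OF T, of "h j"] Cons.prems by simp
  thus ?case using Cons.IH by simp
qed simp

lemma sum_list_map_concat: "(\<Sum>x\<leftarrow>concat xss. f x) = (\<Sum>xs\<leftarrow>xss. \<Sum>x\<leftarrow>xs. f x)"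
  by (induction xss) simp_all

lemma sum_list_map_swap:
  "(\<Sum>ys\<leftarrow>yss. \<Sum>y\<leftarrow>xs. f y ys) = (\<Sum>y\<leftarrow>xs. \<Sum>ys\<leftarrow>yss. f y ys)"
  for f :: "'a \<Rightarrow> 'b \<Rightarrow> 'c :: comm_monoid_add"
  by (induction yss) (simp_all add: sum_list_addf)

text \<open>A path of length \<open>l + 1\<close> is \<open>j # p\<close>, and \<open>p\<close> is applied to the first-layer output
  \<open>\<bar>H\<^sub>j x\<bar>\<close>; so each layer costs one factor \<open>B\<^sup>2\<close> of the frame bound.\<close>
lemma gst_layer_energy_le:
  assumes T: "T \<in> carrier_mat g g" "transpose_mat T = T"
    and frame: "\<forall>v \<in> carrier_vec g.
      (\<Sum>j\<in>{1..J}. (vnorm (mat_fun (h j) T *\<^sub>v v))\<^sup>2) \<le> B\<^sup>2 * (vnorm v)\<^sup>2"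
    and x: "x \<in> carrier_vec g"
  shows "(\<Sum>p\<leftarrow>List.n_lists l [1..<J+1]. (vnorm (gst_node h T x p))\<^sup>2) \<le> (B\<^sup>2) ^ l * (vnorm x)\<^sup>2"
  using x
proof (induction l arbitrary: x)
  case 0
  thus ?case by simp
next
  case (Suc l)
  define layer where "layer j = map_vec abs (mat_fun (h j) T *\<^sub>v x)" for j
  have layer: "layer j \<in> carrier_vec g" for j
    using mat_fun_carrier[OF T, of "h j"] Suc.prems by (simp add: layer_def)
  have layer_sum: "(\<Sum>j\<leftarrow>[1..<J+1]. (vnorm (layer j))\<^sup>2)
      = (\<Sum>j\<in>{1..J}. (vnorm (mat_fun (h j) T *\<^sub>v x))\<^sup>2)"
    by (simp only: interv_sum_list_conv_sum_set_nat set_upt flip: Suc_eq_plus1)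
      (simp add: atLeastLessThanSuc_atLeastAtMost layer_def)
  have "(\<Sum>p\<leftarrow>List.n_lists (Suc l) [1..<J+1]. (vnorm (gst_node h T x p))\<^sup>2)
      = (\<Sum>p\<leftarrow>List.n_lists l [1..<J+1]. \<Sum>j\<leftarrow>[1..<J+1]. (vnorm (gst_node h T (layer j) p))\<^sup>2)"
    by (simp add: sum_list_map_concat o_def layer_def)
  also have "\<dots> = (\<Sum>j\<leftarrow>[1..<J+1]. \<Sum>p\<leftarrow>List.n_lists l [1..<J+1]. (vnorm (gst_node h T (layer j) p))\<^sup>2)"
    by (rule sum_list_map_swap)
  also have "\<dots> \<le> (\<Sum>j\<leftarrow>[1..<J+1]. (B\<^sup>2) ^ l * (vnorm (layer j))\<^sup>2)"
    by (intro sum_list_mono Suc.IH layer)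
  also have "\<dots> = (B\<^sup>2) ^ l * (\<Sum>j\<in>{1..J}. (vnorm (mat_fun (h j) T *\<^sub>v x))\<^sup>2)"
    unfolding sum_list_const_mult layer_sum ..
  also have "\<dots> \<le> (B\<^sup>2) ^ l * (B\<^sup>2 * (vnorm x)\<^sup>2)"
    using frame Suc.prems by (intro mult_left_mono) auto
  finally show ?case by (simp add: algebra_simps)
qed

lemma gst_coef_sq_le:
  assumes T: "T \<in> carrier_mat g g" "transpose_mat T = T" and x: "x \<in> carrier_vec g"
  shows "real g * (gst_coef h T x p)\<^sup>2 \<le> (vnorm (gst_node h T x p))\<^sup>2"
proof -
  define \<Phi> where "\<Phi> = gst_node h T x p"
  have "real g * (gst_coef h T x p)\<^sup>2 = (\<Sum>a<g. \<Phi> $ a)\<^sup>2 / real g"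
    using x by (simp add: gst_coef_def \<Phi>_def power2_eq_square)
  also have "\<dots> \<le> (\<Sum>a<g. (\<Phi> $ a)\<^sup>2)"
    using sum_squared_le_sum_of_squares[of "\<lambda>a. \<Phi> $ a" "{..<g}"]
    by (cases "g = 0") (simp_all add: divide_le_eq mult.commute)
  also have "\<dots> = (vnorm \<Phi>)\<^sup>2"
    using vnorm_sq_eq_sum[OF gst_node_carrier[OF T x]] by (simp add: \<Phi>_def)
  finally show ?thesis by (simp add: \<Phi>_def)
qed

lemma length_gst_paths: "length (gst_paths J L) = gst_dim J L"
proof -
  have "length (List.n_lists l [1..<J+1]) = J ^ l" for l
    by (simp only: length_n_lists length_upt) simp
  thus ?thesis
    by (simp add: gst_paths_def gst_dim_def length_concat o_def
        sum_list_distinct_conv_sum_set atLeast0LessThan)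
qed

lemma gst_carrier: "gst J L h T x \<in> carrier_vec (gst_dim J L)"
  by (simp add: gst_def carrier_vecI length_gst_paths)

lemma vnorm_gst_le:
  assumes T: "T \<in> carrier_mat g g" "transpose_mat T = T"
    and frame: "\<forall>v \<in> carrier_vec g.
      (\<Sum>j\<in>{1..J}. (vnorm (mat_fun (h j) T *\<^sub>v v))\<^sup>2) \<le> B\<^sup>2 * (vnorm v)\<^sup>2"
    and x: "x \<in> carrier_vec g" and x_bound: "\<forall>a<g. \<bar>x $ a\<bar> \<le> 1" and g: "0 < g"
  shows "vnorm (gst J L h T x) \<le> sqrt (\<Sum>l<L. B ^ (2 * l))"
proof -
  have x_norm: "(vnorm x)\<^sup>2 \<le> real g"
  proof -
    have "(\<Sum>a<g. (x $ a)\<^sup>2) \<le> (\<Sum>a<g. 1)"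
      using x_bound by (intro sum_mono) (simp add: abs_square_le_1)
    thus ?thesis using x by (simp add: vnorm_sq_eq_sum)
  qed
  have layer: "(\<Sum>p\<leftarrow>List.n_lists l [1..<J+1]. (gst_coef h T x p)\<^sup>2) \<le> (B\<^sup>2) ^ l" for l
  proof -
    have "real g * (\<Sum>p\<leftarrow>List.n_lists l [1..<J+1]. (gst_coef h T x p)\<^sup>2)
        \<le> (\<Sum>p\<leftarrow>List.n_lists l [1..<J+1]. (vnorm (gst_node h T x p))\<^sup>2)"
      unfolding sum_list_const_mult[symmetric] by (intro sum_list_mono gst_coef_sq_le[OF T x])
    also have "\<dots> \<le> (B\<^sup>2) ^ l * (vnorm x)\<^sup>2" by (rule gst_layer_energy_le[OF T frame x])
    also have "\<dots> \<le> real g * (B\<^sup>2) ^ l" using x_norm by (simp add: mult.commute[of "real g"] mult_left_mono)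
    finally show ?thesis by (rule mult_left_le_imp_le) (use g in simp)
  qed
  have "(vnorm (gst J L h T x))\<^sup>2 = (\<Sum>p\<leftarrow>gst_paths J L. (gst_coef h T x p)\<^sup>2)"
    unfolding vnorm_sq by (simp add: gst_def scalar_prod_def sum_list_sum_nth vec_of_list_index
        power2_eq_square atLeast0LessThan)
  also have "\<dots> = (\<Sum>l\<leftarrow>[0..<L]. \<Sum>p\<leftarrow>List.n_lists l [1..<J+1]. (gst_coef h T x p)\<^sup>2)"
    by (simp add: gst_paths_def sum_list_map_concat o_def)
  also have "\<dots> \<le> (\<Sum>l\<leftarrow>[0..<L]. (B\<^sup>2) ^ l)" by (rule sum_list_mono[OF layer])
  also have "\<dots> = (\<Sum>l<L. B ^ (2 * l))"
    by (simp add: sum_list_distinct_conv_sum_set atLeast0LessThan power_mult)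
  finally show ?thesis by (rule real_le_rsqrt)
qed

lemma remove_shift_carrier: "S \<in> carrier_mat n n \<Longrightarrow> remove_shift R S \<in> carrier_mat n n"
  by (simp add: remove_shift_def)

lemma remove_shift_symmetric:
  assumes "S \<in> carrier_mat n n" "transpose_mat S = S"
  shows "transpose_mat (remove_shift R S) = remove_shift R S"
proof -
  have "S $$ (b, a) = S $$ (a, b)" if "a < n" "b < n" for a b
    using assms that by (metis carrier_matD index_transpose_mat(1))
  thus ?thesis using assms by (intro eq_matI) (auto simp: remove_shift_def)
qed

lemma remove_signal_carrier: "x \<in> carrier_vec n \<Longrightarrow> remove_signal R x \<in> carrier_vec n"
  by (simp add: remove_signal_def)

lemma abs_remove_signal_le: "a < dim_vec x \<Longrightarrow> \<bar>remove_signal R x $ a\<bar> \<le> \<bar>x $ a\<bar>"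
  by (simp add: remove_signal_def)

lemma vnorm_gst_after_removal_le:
  assumes S: "S \<in> carrier_mat g g" "transpose_mat S = S"
    and frame: "\<forall>T \<in> {S, remove_shift R S}. \<forall>v \<in> carrier_vec g.
      (\<Sum>j\<in>{1..J}. (vnorm (mat_fun (h j) T *\<^sub>v v))\<^sup>2) \<le> B\<^sup>2 * (vnorm v)\<^sup>2"
    and x: "x \<in> carrier_vec g" and x_bound: "\<forall>a<g. \<bar>x $ a\<bar> \<le> 1" and g: "0 < g"
  shows "vnorm (if R = {} then gst J L h S x
      else gst J L h (remove_shift R S) (remove_signal R x)) \<le> sqrt (\<Sum>l<L. B ^ (2 * l))"
proof -
  have "vnorm (gst J L h (remove_shift R S) (remove_signal R x)) \<le> sqrt (\<Sum>l<L. B ^ (2 * l))"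
  proof (rule vnorm_gst_le)
    show "remove_shift R S \<in> carrier_mat g g" "transpose_mat (remove_shift R S) = remove_shift R S"
      using S by (auto intro: remove_shift_carrier remove_shift_symmetric)
    show "remove_signal R x \<in> carrier_vec g" using x by (rule remove_signal_carrier)
    show "\<forall>a<g. \<bar>remove_signal R x $ a\<bar> \<le> 1"
      using x_bound abs_remove_signal_le[of _ x R] x by (force simp: carrier_vecD)
  qed (use frame g in auto)
  thus ?thesis using vnorm_gst_le[OF S _ x x_bound g] frame by auto
qed

section \<open>Real calculus\<close>

text \<open>If \<open>f'' s < 0\<close>, then \<open>f'\<close> is larger than \<open>f' s\<close> just left of \<open>s\<close> and smaller just right
  of it, so by the mean value theorem \<open>f\<close> lies strictly below its tangent at \<open>s\<close> on both
  sides, contradicting midpoint convexity.\<close>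
lemma convex_second_derivative_nonneg:
  fixes f f' f'' :: "real \<Rightarrow> real"
  assumes convex: "convex_on UNIV f"
    and f': "\<And>x. (f has_real_derivative f' x) (at x)"
    and f'': "\<And>x. (f' has_real_derivative f'' x) (at x)"
  shows "0 \<le> f'' s"
proof (rule ccontr)
  assume "\<not> 0 \<le> f'' s"
  hence neg: "f'' s < 0" by simp
  obtain d1 where d1: "0 < d1" "\<forall>h>0. h < d1 \<longrightarrow> f' (s + h) < f' s"
    using DERIV_neg_dec_right[OF f'' neg] by blast
  obtain d2 where d2: "0 < d2" "\<forall>h>0. h < d2 \<longrightarrow> f' s < f' (s - h)"
    using DERIV_neg_dec_left[OF f'' neg] by blast
  define h where "h = min d1 d2 / 2"
  have h: "0 < h" "h < d1" "h < d2" using d1 d2 by (auto simp: h_def)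
  obtain z1 where z1: "s < z1" "z1 < s + h" "f (s + h) - f s = h * f' z1"
    using MVT2[of s "s + h" f f'] h f' by auto
  have right: "f (s + h) - f s < h * f' s"
    using d1(2)[rule_format, of "z1 - s"] z1 h by (simp add: z1(3) mult_strict_left_mono)
  obtain z2 where z2: "s - h < z2" "z2 < s" "f s - f (s - h) = h * f' z2"
    using MVT2[of "s - h" s f f'] h f' by auto
  have left: "h * f' s < f s - f (s - h)"
    using d2(2)[rule_format, of "s - z2"] z2 h by (simp add: z2(3) mult_strict_left_mono)
  have mid: "(1 - 1 / 2) *\<^sub>R (s - h) + (1 / 2) *\<^sub>R (s + h) = s" by (simp add: field_simps)
  have "f s \<le> (1 - 1 / 2) * f (s - h) + 1 / 2 * f (s + h)"
    using convex_onD[OF convex, of "1 / 2" "s - h" "s + h"] unfolding mid by simp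
  hence "2 * f s \<le> f (s - h) + f (s + h)" by (simp add: field_simps)
  thus False using left right by linarith
qed

lemma lipschitz_derivative_remainder_le:
  fixes f f' :: "real \<Rightarrow> real"
  assumes f': "\<And>x. (f has_real_derivative f' x) (at x)"
    and lip: "\<And>a b. \<bar>f' a - f' b\<bar> \<le> c * \<bar>a - b\<bar>"
  shows "\<bar>f (s + t) - f s - f' s * t\<bar> \<le> c * t\<^sup>2"
proof -
  have c: "0 \<le> c" using lip[of 1 0] by simp
  have "((\<lambda>u. f (s + u * t)) has_real_derivative f' (s + u * t) * t) (at u)" for u
    by (rule DERIV_chain2[OF f']) (auto intro!: derivative_eq_intros)
  then obtain \<xi> where \<xi>: "0 < \<xi>" "\<xi> < 1" "f (s + t) - f s = f' (s + \<xi> * t) * t"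
    using MVT2[of 0 1 "\<lambda>u. f (s + u * t)" "\<lambda>u. f' (s + u * t) * t"] by auto
  have "f (s + t) - f s - f' s * t = t * (f' (s + \<xi> * t) - f' s)"
    using \<xi>(3) by (simp add: algebra_simps)
  hence "\<bar>f (s + t) - f s - f' s * t\<bar> = \<bar>t\<bar> * \<bar>f' (s + \<xi> * t) - f' s\<bar>"
    by (simp add: abs_mult)
  also have "\<dots> \<le> \<bar>t\<bar> * (c * (\<xi> * \<bar>t\<bar>))"
    using lip[of "s + \<xi> * t" s] \<xi> by (intro mult_left_mono) (auto simp: abs_mult)
  also have "\<dots> \<le> \<bar>t\<bar> * (c * \<bar>t\<bar>)"
    using \<xi> c by (intro mult_left_mono) (auto simp: mult_left_le_one_le)
  finally show ?thesis by (simp add: power2_eq_square abs_mult_self_eq mult.left_commute)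
qed

section \<open>The regularised risk and the Newton step\<close>

lemma lipschitz_derivative_remainder_scalar_prod_le:
  fixes f f' :: "real \<Rightarrow> real"
  assumes f': "\<And>x. (f has_real_derivative f' x) (at x)"
    and lip: "\<And>a b. \<bar>f' a - f' b\<bar> \<le> c * \<bar>a - b\<bar>"
    and u: "u \<in> carrier_vec d" and z: "z \<in> carrier_vec d" and z_norm: "vnorm z \<le> F"
  shows "\<bar>f (s + u \<bullet> z) - f s - f' s * (u \<bullet> z)\<bar> \<le> c * (vnorm u * F)\<^sup>2"
proof -
  have c: "0 \<le> c" using lip[of 1 0] by simp
  have "\<bar>u \<bullet> z\<bar> \<le> vnorm u * F"
    using abs_scalar_prod_le[OF u z] z_norm vnorm_nonneg[of u] by (meson mult_left_mono order_trans)
  hence "\<bar>u \<bullet> z\<bar>\<^sup>2 \<le> (vnorm u * F)\<^sup>2" by (rule power_mono) simp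
  hence "c * (u \<bullet> z)\<^sup>2 \<le> c * (vnorm u * F)\<^sup>2" using c by (simp add: mult_left_mono)
  thus ?thesis using lipschitz_derivative_remainder_le[OF f' lip, of s "u \<bullet> z"] by linarith
qed

lemma risk_directional_derivative:
  fixes z :: "nat \<Rightarrow> real vec"
  assumes ls': "\<forall>s t. ((\<lambda>s. ls s t) has_real_derivative ls' s t) (at s)"
    and z: "\<And>i. i < n \<Longrightarrow> z i \<in> carrier_vec d" and w: "w \<in> carrier_vec d" and a: "a < d"
  shows "((\<lambda>t. risk ls lam n z y (w + t \<cdot>\<^sub>v unit_vec d a))
    has_real_derivative risk_grad ls' lam d n z y w $ a) (at 0)"
proof -
  have e: "unit_vec d a \<in> carrier_vec d" by simp
  have dot: "(w + t \<cdot>\<^sub>v unit_vec d a) \<bullet> z i = w \<bullet> z i + t * z i $ a" if "i < n" for i t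
    using z[OF that] w a
    by (simp add: add_scalar_prod_distrib[of _ d] smult_scalar_prod_distrib[of _ d] scalar_prod_left_unit)
  have sq: "(vnorm (w + t \<cdot>\<^sub>v unit_vec d a))\<^sup>2 = w \<bullet> w + 2 * t * w $ a + t\<^sup>2" for t
    unfolding vnorm_sq using w a e comm_scalar_prod[OF w e]
    by (simp add: add_scalar_prod_distrib[of _ d] scalar_prod_add_distrib[of _ d]
        smult_scalar_prod_distrib[of _ d] scalar_prod_smult_distrib[of _ d] scalar_prod_left_unit
        power2_eq_square algebra_simps)
  have risk_line: "risk ls lam n z y (w + t \<cdot>\<^sub>v unit_vec d a)
      = (\<Sum>i<n. ls (w \<bullet> z i + t * z i $ a) (y i) + lam / 2 * (w \<bullet> w + 2 * t * w $ a + t\<^sup>2))" for t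
    unfolding risk_def by (intro sum.cong) (simp_all add: dot sq)
  have "((\<lambda>t. ls (w \<bullet> z i + t * z i $ a) (y i)) has_real_derivative ls' (w \<bullet> z i) (y i) * z i $ a)
      (at 0)" for i
  proof -
    have "((\<lambda>s. ls s (y i)) has_real_derivative ls' (w \<bullet> z i) (y i)) (at (w \<bullet> z i + 0 * z i $ a))"
      using ls' by simp
    moreover have "((\<lambda>t. w \<bullet> z i + t * z i $ a) has_real_derivative z i $ a) (at 0)"
      by (auto intro!: derivative_eq_intros)
    ultimately show ?thesis by (rule DERIV_chain2)
  qed
  hence "((\<lambda>t. \<Sum>i<n. ls (w \<bullet> z i + t * z i $ a) (y i) + lam / 2 * (w \<bullet> w + 2 * t * w $ a + t\<^sup>2))
      has_real_derivative (\<Sum>i<n. ls' (w \<bullet> z i) (y i) * z i $ a + lam * w $ a)) (at 0)"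
    by (intro DERIV_sum DERIV_add) (auto intro!: derivative_eq_intros)
  thus ?thesis using a by (simp add: risk_line risk_grad_def)
qed

lemma risk_grad_eq_zero_at_min:
  fixes z :: "nat \<Rightarrow> real vec"
  assumes ls': "\<forall>s t. ((\<lambda>s. ls s t) has_real_derivative ls' s t) (at s)"
    and z: "\<And>i. i < n \<Longrightarrow> z i \<in> carrier_vec d" and w: "w \<in> carrier_vec d"
    and min: "\<forall>v \<in> carrier_vec d. risk ls lam n z y w \<le> risk ls lam n z y v"
  shows "risk_grad ls' lam d n z y w = 0\<^sub>v d"
proof (rule eq_vecI)
  fix a assume "a < dim_vec (0\<^sub>v d)"
  hence a: "a < d" by simp
  have w0: "w + 0 \<cdot>\<^sub>v unit_vec d a = w" using w by (intro eq_vecI) auto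
  have "((\<lambda>t. risk ls lam n z y (w + t \<cdot>\<^sub>v unit_vec d a))
      has_real_derivative risk_grad ls' lam d n z y w $ a) (at 0)"
    by (rule risk_directional_derivative[OF ls' _ w a]) (use z in blast)
  hence "risk_grad ls' lam d n z y w $ a = 0"
    by (rule DERIV_local_min[where d = 1]) (use min w w0 in simp_all)
  thus "risk_grad ls' lam d n z y w $ a = 0\<^sub>v d $ a" using a by simp
qed (simp add: risk_grad_def)

lemma dim_vec_risk_grad [simp]: "dim_vec (risk_grad ls' lam d n Z y w) = d"
  by (simp add: risk_grad_def)

lemma dim_risk_hess [simp]:
  "dim_row (risk_hess ls'' lam d n Z y w) = d" "dim_col (risk_hess ls'' lam d n Z y w) = d"
  by (simp_all add: risk_hess_def)

lemma risk_grad_index: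
  "a < d \<Longrightarrow> risk_grad ls' lam d n Z y w $ a
    = (\<Sum>i<n. ls' (w \<bullet> Z i) (y i) * Z i $ a) + real n * lam * w $ a"
  by (simp add: risk_grad_def sum.distrib)

lemma risk_hess_mult_vec_index:
  fixes Z :: "nat \<Rightarrow> real vec"
  assumes Z: "\<And>i. i < n \<Longrightarrow> Z i \<in> carrier_vec d" and v: "v \<in> carrier_vec d" and a: "a < d"
  shows "(risk_hess ls'' lam d n Z y w *\<^sub>v v) $ a
    = (\<Sum>i<n. ls'' (w \<bullet> Z i) (y i) * (v \<bullet> Z i) * Z i $ a) + real n * lam * v $ a"
proof -
  define c where "c i = ls'' (w \<bullet> Z i) (y i)" for i
  have dimZ: "dim_vec (Z i) = d" if "i < n" for i using Z[OF that] by simp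
  have "(risk_hess ls'' lam d n Z y w *\<^sub>v v) $ a
      = (\<Sum>b<d. (\<Sum>i<n. c i * Z i $ a * Z i $ b) * v $ b)
        + (\<Sum>b<d. real n * (if a = b then lam else 0) * v $ b)"
    using a v by (simp add: risk_hess_def c_def scalar_prod_def atLeast0LessThan sum.distrib
        distrib_right)
  also have "(\<Sum>b<d. real n * (if a = b then lam else 0) * v $ b)
      = (\<Sum>b<d. if b = a then real n * lam * v $ b else 0)"
    by (intro sum.cong) auto
  also have "(\<Sum>b<d. (\<Sum>i<n. c i * Z i $ a * Z i $ b) * v $ b)
      = (\<Sum>i<n. \<Sum>b<d. c i * Z i $ a * (v $ b * Z i $ b))"
    by (subst sum.swap) (simp add: sum_distrib_right sum_distrib_left mult_ac)
  also have "\<dots> = (\<Sum>i<n. c i * (v \<bullet> Z i) * Z i $ a)"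
    by (intro sum.cong) (simp_all add: dimZ scalar_prod_def atLeast0LessThan sum_distrib_left mult_ac)
  finally show ?thesis using a by (simp add: c_def)
qed

lemma risk_hess_quadratic_form:
  fixes Z :: "nat \<Rightarrow> real vec"
  assumes Z: "\<And>i. i < n \<Longrightarrow> Z i \<in> carrier_vec d" and v: "v \<in> carrier_vec d"
  shows "v \<bullet> (risk_hess ls'' lam d n Z y w *\<^sub>v v)
    = (\<Sum>i<n. ls'' (w \<bullet> Z i) (y i) * (v \<bullet> Z i)\<^sup>2) + real n * lam * (v \<bullet> v)"
proof -
  define c where "c i = ls'' (w \<bullet> Z i) (y i)" for i
  have dimZ: "dim_vec (Z i) = d" if "i < n" for i using Z[OF that] by simp
  have "v \<bullet> (risk_hess ls'' lam d n Z y w *\<^sub>v v)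
      = (\<Sum>a<d. v $ a * (risk_hess ls'' lam d n Z y w *\<^sub>v v) $ a)"
    by (simp add: scalar_prod_def atLeast0LessThan risk_hess_def del: index_mult_mat_vec)
  also have "\<dots> = (\<Sum>a<d. v $ a * ((\<Sum>i<n. c i * (v \<bullet> Z i) * Z i $ a) + real n * lam * v $ a))"
    by (intro sum.cong) (simp_all add: risk_hess_mult_vec_index[OF Z v] c_def del: index_mult_mat_vec)
  also have "\<dots> = (\<Sum>a<d. \<Sum>i<n. c i * (v \<bullet> Z i) * (v $ a * Z i $ a))
      + real n * lam * (\<Sum>a<d. v $ a * v $ a)"
    by (simp add: distrib_left sum.distrib sum_distrib_left mult_ac)
  also have "(\<Sum>a<d. \<Sum>i<n. c i * (v \<bullet> Z i) * (v $ a * Z i $ a)) = (\<Sum>i<n. c i * (v \<bullet> Z i)\<^sup>2)"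
    by (subst sum.swap) (auto simp: dimZ scalar_prod_def atLeast0LessThan power2_eq_square
        sum_distrib_left intro!: sum.cong)
  finally show ?thesis using v by (simp add: c_def scalar_prod_def atLeast0LessThan)
qed

lemma risk_hess_coercive:
  fixes Z :: "nat \<Rightarrow> real vec"
  assumes Z: "\<And>i. i < n \<Longrightarrow> Z i \<in> carrier_vec d" and v: "v \<in> carrier_vec d"
    and ls''_nonneg: "\<And>i s. i < n \<Longrightarrow> 0 \<le> ls'' s (y i)"
  shows "real n * lam * (v \<bullet> v) \<le> v \<bullet> (risk_hess ls'' lam d n Z y w *\<^sub>v v)"
proof -
  have "v \<bullet> (risk_hess ls'' lam d n Z y w *\<^sub>v v)
      = (\<Sum>i<n. ls'' (w \<bullet> Z i) (y i) * (v \<bullet> Z i)\<^sup>2) + real n * lam * (v \<bullet> v)"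
    by (rule risk_hess_quadratic_form) (use Z v in auto)
  moreover have "0 \<le> (\<Sum>i<n. ls'' (w \<bullet> Z i) (y i) * (v \<bullet> Z i)\<^sup>2)"
    using ls''_nonneg by (intro sum_nonneg mult_nonneg_nonneg) auto
  ultimately show ?thesis by simp
qed

lemma mat_inv_coercive:
  fixes H :: "real mat"
  assumes H: "H \<in> carrier_mat d d" and \<mu>: "0 < \<mu>"
    and coercive: "\<And>v. v \<in> carrier_vec d \<Longrightarrow> \<mu> * (v \<bullet> v) \<le> v \<bullet> (H *\<^sub>v v)"
  shows "mat_inv d H \<in> carrier_mat d d"
    and "\<And>b. b \<in> carrier_vec d \<Longrightarrow> H *\<^sub>v (mat_inv d H *\<^sub>v b) = b"
proof -
  have "v = 0\<^sub>v d" if v: "v \<in> carrier_vec d" and Hv: "H *\<^sub>v v = 0\<^sub>v d" for v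
  proof (rule ccontr)
    assume "v \<noteq> 0\<^sub>v d"
    hence "0 < \<mu> * (v \<bullet> v)" using \<mu> scalar_prod_self_pos[OF v] by simp
    thus False using coercive[OF v] Hv v by simp
  qed
  hence "det H \<noteq> 0" using det_0_iff_vec_prod_zero_field[OF H] by blast
  then obtain Hi where Hi: "Hi \<in> carrier_mat d d" "Hi * H = 1\<^sub>m d" "H * Hi = 1\<^sub>m d"
    using det_non_zero_imp_unit[OF H] unfolding Units_def ring_mat_def by auto
  have "mat_inv d H = Hi"
    unfolding mat_inv_def
  proof (rule the_equality)
    fix B assume "B \<in> carrier_mat d d \<and> H * B = 1\<^sub>m d \<and> B * H = 1\<^sub>m d"
    hence B: "B \<in> carrier_mat d d" "B * H = 1\<^sub>m d" by auto
    hence "B = B * (H * Hi)" using Hi(3) by simp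
    also have "\<dots> = (B * H) * Hi" using B(1) Hi(1) H by (simp add: assoc_mult_mat[of _ d d _ d _ d])
    finally show "B = Hi" using B Hi by simp
  qed (use Hi in simp)
  thus "mat_inv d H \<in> carrier_mat d d" using Hi by simp
  show "H *\<^sub>v (mat_inv d H *\<^sub>v b) = b" if "b \<in> carrier_vec d" for b
    using that H Hi \<open>mat_inv d H = Hi\<close> by (simp add: assoc_mult_mat_vec[symmetric, of _ d d _ d])
qed

lemma vnorm_mat_inv_coercive_le:
  fixes H :: "real mat"
  assumes H: "H \<in> carrier_mat d d" and \<mu>: "0 < \<mu>"
    and coercive: "\<And>v. v \<in> carrier_vec d \<Longrightarrow> \<mu> * (v \<bullet> v) \<le> v \<bullet> (H *\<^sub>v v)"
    and b: "b \<in> carrier_vec d"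
  shows "\<mu> * vnorm (mat_inv d H *\<^sub>v b) \<le> vnorm b"
proof -
  define u where "u = mat_inv d H *\<^sub>v b"
  have u: "u \<in> carrier_vec d" and Hu: "H *\<^sub>v u = b"
    using mat_inv_coercive[OF H \<mu> coercive] b by (simp_all add: u_def)
  have "vnorm u * (\<mu> * vnorm u) = \<mu> * (u \<bullet> u)" by (simp add: vnorm_sq[symmetric] power2_eq_square)
  also have "\<dots> \<le> u \<bullet> (H *\<^sub>v u)" by (rule coercive[OF u])
  also have "\<dots> \<le> vnorm u * vnorm (H *\<^sub>v u)"
    using abs_scalar_prod_le[OF u mult_mat_vec_carrier[OF H u]] by linarith
  finally have "vnorm u * (\<mu> * vnorm u) \<le> vnorm u * vnorm b" unfolding Hu .
  thus ?thesis
    using vnorm_nonneg[of u] vnorm_nonneg[of b] \<mu>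
    by (cases "vnorm u = 0") (simp_all add: u_def mult_le_cancel_left)
qed

lemma risk_grad_newton_step_eq:
  fixes Z :: "nat \<Rightarrow> real vec"
  assumes Z: "\<And>i. i < n \<Longrightarrow> Z i \<in> carrier_vec d"
    and w: "w \<in> carrier_vec d" and u: "u \<in> carrier_vec d"
    and stationary: "risk_grad ls' lam d n Z y w + risk_hess ls'' lam d n Z y w *\<^sub>v u = 0\<^sub>v d"
  shows "risk_grad ls' lam d n Z y (w + u) = vec d (\<lambda>a. \<Sum>i<n.
    (ls' (w \<bullet> Z i + u \<bullet> Z i) (y i) - ls' (w \<bullet> Z i) (y i) - ls'' (w \<bullet> Z i) (y i) * (u \<bullet> Z i)) * Z i $ a)"
proof (rule eq_vecI)
  fix a assume "a < dim_vec (vec d (\<lambda>a. \<Sum>i<n.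
    (ls' (w \<bullet> Z i + u \<bullet> Z i) (y i) - ls' (w \<bullet> Z i) (y i) - ls'' (w \<bullet> Z i) (y i) * (u \<bullet> Z i)) * Z i $ a))"
  hence a: "a < d" by simp
  have "(w + u) \<bullet> Z i = w \<bullet> Z i + u \<bullet> Z i" if "i < n" for i
    using add_scalar_prod_distrib[OF w u Z[OF that]] .
  hence step: "risk_grad ls' lam d n Z y (w + u) $ a
      = (\<Sum>i<n. ls' (w \<bullet> Z i + u \<bullet> Z i) (y i) * Z i $ a) + real n * lam * (w $ a + u $ a)"
    using a w u by (simp add: risk_grad_index)
  have Hu_index: "(risk_hess ls'' lam d n Z y w *\<^sub>v u) $ a
      = (\<Sum>i<n. ls'' (w \<bullet> Z i) (y i) * (u \<bullet> Z i) * Z i $ a) + real n * lam * u $ a"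
    by (rule risk_hess_mult_vec_index[OF _ u a]) (use Z in auto)
  have "risk_grad ls' lam d n Z y w $ a + (risk_hess ls'' lam d n Z y w *\<^sub>v u) $ a = 0"
    using arg_cong[OF stationary, of "\<lambda>v. v $ a"] a by simp
  hence "(\<Sum>i<n. ls' (w \<bullet> Z i) (y i) * Z i $ a) + real n * lam * w $ a
      + (\<Sum>i<n. ls'' (w \<bullet> Z i) (y i) * (u \<bullet> Z i) * Z i $ a) + real n * lam * u $ a = 0"
    using a by (simp add: risk_grad_index Hu_index del: index_mult_mat_vec)
  thus "risk_grad ls' lam d n Z y (w + u) $ a = vec d (\<lambda>a. \<Sum>i<n.
    (ls' (w \<bullet> Z i + u \<bullet> Z i) (y i) - ls' (w \<bullet> Z i) (y i) - ls'' (w \<bullet> Z i) (y i) * (u \<bullet> Z i)) * Z i $ a) $ a"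
    using a by (simp add: step left_diff_distrib sum_subtractf algebra_simps)
qed (simp add: risk_grad_def)

lemma risk_grad_newton_step_le:
  fixes Z :: "nat \<Rightarrow> real vec"
  assumes n: "0 < n" and lam: "0 < lam"
    and Z: "\<And>i. i < n \<Longrightarrow> Z i \<in> carrier_vec d" and Z_norm: "\<And>i. i < n \<Longrightarrow> vnorm (Z i) \<le> F"
    and ls'': "\<forall>s t. ((\<lambda>s. ls' s t) has_real_derivative ls'' s t) (at s)"
    and ls''_nonneg: "\<And>i s. i < n \<Longrightarrow> 0 \<le> ls'' s (y i)"
    and ls''_lip: "\<And>i s t. i < n \<Longrightarrow> \<bar>ls'' s (y i) - ls'' t (y i)\<bar> \<le> \<gamma>2 * \<bar>s - t\<bar>"
    and w: "w \<in> carrier_vec d" and \<Delta>: "\<Delta> \<in> carrier_vec d"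
    and stationary: "risk_grad ls' lam d n Z y w + \<Delta> = 0\<^sub>v d" and K: "vnorm \<Delta> \<le> K"
  shows "vnorm (risk_grad ls' lam d n Z y (w + mat_inv d (risk_hess ls'' lam d n Z y w) *\<^sub>v \<Delta>))
    \<le> \<gamma>2 * real n * F ^ 3 * (K / (real n * lam))\<^sup>2"
proof -
  define H where "H = risk_hess ls'' lam d n Z y w"
  define u where "u = mat_inv d H *\<^sub>v \<Delta>"
  have H: "H \<in> carrier_mat d d" by (simp add: H_def risk_hess_def)
  have nlam: "0 < real n * lam" using n lam by simp
  have coercive: "real n * lam * (v \<bullet> v) \<le> v \<bullet> (H *\<^sub>v v)" if "v \<in> carrier_vec d" for v
    unfolding H_def by (rule risk_hess_coercive) (use Z that ls''_nonneg in auto)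
  have u: "u \<in> carrier_vec d" and Hu: "H *\<^sub>v u = \<Delta>"
    using mat_inv_coercive[OF H nlam coercive] \<Delta> by (simp_all add: u_def)
  have u_norm: "vnorm u \<le> K / (real n * lam)"
    using vnorm_mat_inv_coercive_le[OF H nlam coercive \<Delta>] K nlam
    by (simp add: u_def pos_le_divide_eq mult.commute)
  define r where "r i = ls' (w \<bullet> Z i + u \<bullet> Z i) (y i) - ls' (w \<bullet> Z i) (y i)
    - ls'' (w \<bullet> Z i) (y i) * (u \<bullet> Z i)" for i
  have \<gamma>2: "0 \<le> \<gamma>2" using ls''_lip[OF n, of 1 0] by simp
  have F: "0 \<le> F" using Z_norm[OF n] vnorm_nonneg[of "Z 0"] by linarith
  have r: "\<bar>r i\<bar> * vnorm (Z i) \<le> \<gamma>2 * (vnorm u * F)\<^sup>2 * F" if i: "i < n" for i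
  proof (rule mult_mono)
    show "\<bar>r i\<bar> \<le> \<gamma>2 * (vnorm u * F)\<^sup>2"
      unfolding r_def
      by (rule lipschitz_derivative_remainder_scalar_prod_le[OF _ _ u Z[OF i] Z_norm[OF i]])
        (use ls'' ls''_lip[OF i] in auto)
  qed (use Z_norm[OF i] \<gamma>2 vnorm_nonneg in auto)
  have newton: "risk_grad ls' lam d n Z y w + H *\<^sub>v u = 0\<^sub>v d" using stationary Hu by simp
  have "risk_grad ls' lam d n Z y (w + u) = vec d (\<lambda>a. \<Sum>i<n. r i * Z i $ a)"
    unfolding r_def by (rule risk_grad_newton_step_eq[OF _ w u]) (use Z newton in \<open>auto simp: H_def\<close>)
  hence "vnorm (risk_grad ls' lam d n Z y (w + u)) \<le> (\<Sum>i<n. \<bar>r i\<bar> * vnorm (Z i))"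
    using vnorm_lincomb_le[of n Z d r] Z by simp
  also have "\<dots> \<le> (\<Sum>i<n. \<gamma>2 * (vnorm u * F)\<^sup>2 * F)" by (intro sum_mono r) simp
  also have "\<dots> = \<gamma>2 * real n * F ^ 3 * (vnorm u)\<^sup>2"
    by (simp add: power2_eq_square power3_eq_cube mult_ac)
  also have "\<dots> \<le> \<gamma>2 * real n * F ^ 3 * (K / (real n * lam))\<^sup>2"
    using u_norm vnorm_nonneg[of u] \<gamma>2 F by (intro mult_left_mono power_mono) auto
  finally show ?thesis by (simp add: H_def u_def)
qed

lemma vnorm_risk_grad_removal_le:
  fixes z z' :: "nat \<Rightarrow> real vec" and R :: "nat \<Rightarrow> 'b set"
  assumes z: "\<And>i. i < n \<Longrightarrow> z i \<in> carrier_vec d" and z': "\<And>i. i < n \<Longrightarrow> z' i \<in> carrier_vec d"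
    and unchanged: "\<And>i. i < n \<Longrightarrow> R i = {} \<Longrightarrow> z' i = z i"
    and finite: "\<And>i. i < n \<Longrightarrow> finite (R i)"
    and C1: "\<And>i. i < n \<Longrightarrow> vnorm (ls' (w \<bullet> z i) (y i) \<cdot>\<^sub>v z i) \<le> C1"
    and C1': "\<And>i. i < n \<Longrightarrow> vnorm (ls' (w \<bullet> z' i) (y i) \<cdot>\<^sub>v z' i) \<le> C1"
  shows "vnorm (risk_grad ls' lam d n z y w - risk_grad ls' lam d n z' y w)
    \<le> 2 * C1 * real (\<Sum>i<n. card (R i))"
proof -
  define v where "v i = ls' (w \<bullet> z i) (y i) \<cdot>\<^sub>v z i - ls' (w \<bullet> z' i) (y i) \<cdot>\<^sub>v z' i" for i
  have v: "v i \<in> carrier_vec d" if "i < n" for i using z[OF that] z'[OF that] by (simp add: v_def)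
  have v_index: "v i $ a = ls' (w \<bullet> z i) (y i) * z i $ a - ls' (w \<bullet> z' i) (y i) * z' i $ a"
    if "i < n" "a < d" for i a
    using z[OF that(1)] z'[OF that(1)] that(2) by (simp add: v_def)
  have "risk_grad ls' lam d n z y w - risk_grad ls' lam d n z' y w = vec d (\<lambda>a. \<Sum>i<n. v i $ a)"
    by (intro eq_vecI) (simp_all add: risk_grad_index v_index sum_subtractf)
  hence "vnorm (risk_grad ls' lam d n z y w - risk_grad ls' lam d n z' y w) \<le> (\<Sum>i<n. vnorm (v i))"
    using vnorm_sum_le[of n v d] v by simp
  also have "\<dots> \<le> (\<Sum>i<n. 2 * C1 * real (card (R i)))"
  proof (intro sum_mono)
    fix i assume "i \<in> {..<n}"
    hence i: "i < n" by simp
    show "vnorm (v i) \<le> 2 * C1 * real (card (R i))"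
    proof (cases "R i = {}")
      case True
      thus ?thesis using unchanged[OF i] z[OF i] by (simp add: v_def vnorm_def)
    next
      case False
      hence "1 \<le> real (card (R i))" using finite[OF i] by (simp add: Suc_le_eq card_gt_0_iff)
      moreover have "vnorm (v i) \<le> 2 * C1"
        using vnorm_diff_le[of "ls' (w \<bullet> z i) (y i) \<cdot>\<^sub>v z i" d "ls' (w \<bullet> z' i) (y i) \<cdot>\<^sub>v z' i"]
          z[OF i] z'[OF i] C1[OF i] C1'[OF i]
        by (simp add: v_def)
      moreover have "0 \<le> C1" using C1[OF i] vnorm_nonneg order_trans by blast
      ultimately show ?thesis using mult_left_mono[of 1 "real (card (R i))" "2 * C1"] by simp
    qed
  qed
  also have "\<dots> = 2 * C1 * real (\<Sum>i<n. card (R i))" by (simp add: sum_distrib_left)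
  finally show ?thesis .
qed

theorem newton_update_after_removal_le:
  fixes z z' :: "nat \<Rightarrow> real vec" and R :: "nat \<Rightarrow> 'b set"
  assumes n: "0 < n" and lam: "0 < lam"
    and z: "\<And>i. z i \<in> carrier_vec d" and z': "\<And>i. z' i \<in> carrier_vec d"
    and z'_norm: "\<And>i. i < n \<Longrightarrow> vnorm (z' i) \<le> F"
    and unchanged: "\<And>i. i < n \<Longrightarrow> R i = {} \<Longrightarrow> z' i = z i"
    and finite: "\<And>i. i < n \<Longrightarrow> finite (R i)"
    and ls': "\<forall>s t. ((\<lambda>s. ls s t) has_real_derivative ls' s t) (at s)"
    and ls'': "\<forall>s t. ((\<lambda>s. ls' s t) has_real_derivative ls'' s t) (at s)"
    and convex: "\<forall>t. convex_on UNIV (\<lambda>s. ls s t)"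
    and wstar: "wstar \<in> carrier_vec d"
    and wstar_min: "\<forall>w \<in> carrier_vec d. risk ls lam n z y wstar \<le> risk ls lam n z y w"
    and C1: "\<And>i. i < n \<Longrightarrow> vnorm (ls' (wstar \<bullet> z i) (y i) \<cdot>\<^sub>v z i) \<le> C1"
      "\<And>i. i < n \<Longrightarrow> vnorm (ls' (wstar \<bullet> z' i) (y i) \<cdot>\<^sub>v z' i) \<le> C1"
    and ls''_lip: "\<And>i s t. i < n \<Longrightarrow> \<bar>ls'' s (y i) - ls'' t (y i)\<bar> \<le> \<gamma>2 * \<bar>s - t\<bar>"
  shows "vnorm (risk_grad ls' lam d n z' y (wstar + mat_inv d (risk_hess ls'' lam d n z' y wstar)
      *\<^sub>v (risk_grad ls' lam d n z y wstar - risk_grad ls' lam d n z' y wstar)))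
    \<le> 4 * \<gamma>2 * (real (\<Sum>i<n. card (R i)))\<^sup>2 * C1\<^sup>2 * F ^ 3 / (lam\<^sup>2 * real n)"
proof -
  have "risk_grad ls' lam d n z y wstar = 0\<^sub>v d"
    by (rule risk_grad_eq_zero_at_min[OF ls' _ wstar wstar_min]) (rule z)
  hence stationary: "risk_grad ls' lam d n z' y wstar
      + (risk_grad ls' lam d n z y wstar - risk_grad ls' lam d n z' y wstar) = 0\<^sub>v d"
    by (intro eq_vecI) simp_all
  have \<Delta>_norm: "vnorm (risk_grad ls' lam d n z y wstar - risk_grad ls' lam d n z' y wstar)
      \<le> 2 * C1 * real (\<Sum>i<n. card (R i))"
    by (rule vnorm_risk_grad_removal_le) (use z z' unchanged finite C1 in auto)
  have "vnorm (risk_grad ls' lam d n z' y (wstar + mat_inv d (risk_hess ls'' lam d n z' y wstar)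
      *\<^sub>v (risk_grad ls' lam d n z y wstar - risk_grad ls' lam d n z' y wstar)))
    \<le> \<gamma>2 * real n * F ^ 3 * (2 * C1 * real (\<Sum>i<n. card (R i)) / (real n * lam))\<^sup>2"
  proof (rule risk_grad_newton_step_le[OF n lam _ _ ls'' _ _ wstar _ stationary \<Delta>_norm])
    fix i s t assume i: "i < n"
    show "z' i \<in> carrier_vec d" "vnorm (z' i) \<le> F" by (fact z', rule z'_norm[OF i])
    show "0 \<le> ls'' s (y i)"
      by (rule convex_second_derivative_nonneg[of "\<lambda>s. ls s (y i)" "\<lambda>s. ls' s (y i)"])
        (use convex ls' ls'' in auto)
    show "\<bar>ls'' s (y i) - ls'' t (y i)\<bar> \<le> \<gamma>2 * \<bar>s - t\<bar>" by (rule ls''_lip[OF i])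
  qed (simp add: carrier_vecI)
  also have "\<dots> = 4 * \<gamma>2 * (real (\<Sum>i<n. card (R i)))\<^sup>2 * C1\<^sup>2 * F ^ 3 / (lam\<^sup>2 * real n)"
    using n lam by (simp add: field_simps power2_eq_square)
  finally show ?thesis .
qed

theorem corollary4p5:
  fixes n J L m :: nat
    and g :: "nat \<Rightarrow> nat"
    and S :: "nat \<Rightarrow> real mat"
    and x :: "nat \<Rightarrow> real vec"
    and y :: "nat \<Rightarrow> 'y"
    and h :: "nat \<Rightarrow> real \<Rightarrow> real"
    and A B lam C1 C2 \<gamma>1 \<gamma>2 :: real
    and ls ls' ls'' :: "real \<Rightarrow> 'y \<Rightarrow> real"
    and R :: "nat \<Rightarrow> nat set"
    and wstar :: "real vec"
  defines "d \<equiv> gst_dim J L"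
    and "z \<equiv> (\<lambda>i. gst J L h (S i) (x i))"
    and "z' \<equiv> (\<lambda>i. if R i = {} then gst J L h (S i) (x i)
                   else gst J L h (remove_shift (R i) (S i)) (remove_signal (R i) (x i)))"
  assumes J_pos: "J > 0" and L_pos: "L > 0"
    and graphs: "\<forall>i<n. S i \<in> carrier_mat (g i) (g i) \<and> transpose_mat (S i) = S i
                        \<and> x i \<in> carrier_vec (g i)"
    and signal_bound: "\<forall>i<n. \<forall>a<g i. \<bar>x i $ a\<bar> \<le> 1"
    and frame: "0 < A" "A \<le> B"
      "\<forall>i<n. \<forall>T \<in> {S i, remove_shift (R i) (S i)}. \<forall>v \<in> carrier_vec (g i).
          A\<^sup>2 * (vnorm v)\<^sup>2 \<le> (\<Sum>j\<in>{1..J}. (vnorm (mat_fun (h j) T *\<^sub>v v))\<^sup>2)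
        \<and> (\<Sum>j\<in>{1..J}. (vnorm (mat_fun (h j) T *\<^sub>v v))\<^sup>2) \<le> B\<^sup>2 * (vnorm v)\<^sup>2"
    and removal: "\<forall>i<n. R i \<subseteq> {..<g i}" "(\<Sum>i<n. card (R i)) = m" "\<forall>i<n. m < g i"
    and loss_d1: "\<forall>s t. ((\<lambda>s. ls s t) has_real_derivative ls' s t) (at s)"
    and loss_d2: "\<forall>s t. ((\<lambda>s. ls' s t) has_real_derivative ls'' s t) (at s)"
    and loss_convex: "\<forall>t. convex_on UNIV (\<lambda>s. ls s t)"
    and lam_pos: "lam > 0"
    and wstar_dim: "wstar \<in> carrier_vec d"
    and wstar_min: "\<forall>w \<in> carrier_vec d. risk ls lam n z y wstar \<le> risk ls lam n z y w"
    and A1: "\<forall>i<n. \<forall>zz \<in> {z i, z' i}. \<forall>w \<in> carrier_vec d.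
               vnorm (ls' (scalar_prod w zz) (y i) \<cdot>\<^sub>v zz) \<le> C1"
    and A2: "\<forall>i<n. \<forall>zz \<in> {z i, z' i}. \<forall>w \<in> carrier_vec d.
               \<bar>ls' (scalar_prod w zz) (y i)\<bar> \<le> C2"
    and A3: "\<forall>i<n. \<forall>s t. \<bar>ls' s (y i) - ls' t (y i)\<bar> \<le> \<gamma>1 * \<bar>s - t\<bar>"
    and A4: "\<forall>i<n. \<forall>s t. \<bar>ls'' s (y i) - ls'' t (y i)\<bar> \<le> \<gamma>2 * \<bar>s - t\<bar>"
  shows "vnorm (risk_grad ls' lam d n z' y
            (wstar + mat_inv d (risk_hess ls'' lam d n z' y wstar)
                       *\<^sub>v (risk_grad ls' lam d n z y wstar - risk_grad ls' lam d n z' y wstar)))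
         \<le> 4 * \<gamma>2 * (real m)\<^sup>2 * C1\<^sup>2 * (sqrt (\<Sum>l<L. B ^ (2 * l))) ^ 3 / (lam\<^sup>2 * real n)"
proof (cases "n = 0")
  case True
  \<comment> \<open>the gradient is then zero, and so is the bound, by division by zero\<close>
  thus ?thesis by (simp add: risk_grad_def vnorm_def scalar_prod_def)
next
  case False
  show ?thesis
    unfolding removal(2)[symmetric]
  proof (rule newton_update_after_removal_le[OF _ lam_pos _ _ _ _ _ loss_d1 loss_d2 loss_convex
        wstar_dim wstar_min])
    fix i assume i: "i < n"
    show "vnorm (z' i) \<le> sqrt (\<Sum>l<L. B ^ (2 * l))"
      unfolding z'_def
      by (rule vnorm_gst_after_removal_le) (use graphs signal_bound frame(3) removal(3) i in auto)
    show "R i = {} \<Longrightarrow> z' i = z i" by (simp add: z_def z'_def)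
    show "finite (R i)" using removal(1) i by (meson finite_lessThan finite_subset)
    show "vnorm (ls' (wstar \<bullet> z i) (y i) \<cdot>\<^sub>v z i) \<le> C1"
      "vnorm (ls' (wstar \<bullet> z' i) (y i) \<cdot>\<^sub>v z' i) \<le> C1"
      using A1 i wstar_dim by auto
  next
    fix i s t assume "i < n"
    thus "\<bar>ls'' s (y i) - ls'' t (y i)\<bar> \<le> \<gamma>2 * \<bar>s - t\<bar>" using A4 by blast
  qed (use False in \<open>simp_all add: z_def z'_def d_def gst_carrier\<close>)
qed

end
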